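(* Let $W\subset\mathbb R^m$ be a linear subspace, $\mathcal W\subset[m]$ a sample of the determinantal measure $\mathbb P^W$, $u\in[m]$, $k\ge1$ an integer and $\gamma\in(0,1/k)$. Suppose $\xi_1,\dots,\xi_k\in W$ satisfy (i) $|\xi_i(u)|=1$ for all $i\in[k]$, and (ii) $|\langle\xi_i,\xi_j\rangle|\le\gamma\min(\|\xi_i\|^2,\|\xi_j\|^2)$ for all $i\ne j$ in $[k]$. Then \[\mathbb P^W(u\in\mathcal W)\ge\Big(1-\frac{\gamma k}{1-\gamma k}\Big)\sum_{i=1}^k\frac{1}{\|\xi_i\|^2}.\]
   Context: For a linear subspace $W\subset\mathbb R^m$ with orthogonal projection $P_W$ (an $m\times m$ matrix), the determinantal measure $\mathbb P^W$ is the probability measure on subsets $\mathcal S\subset[m]$ of size $\dim W$ given by $\mathbb P^W(\mathcal S)=\det(P_W|_{\mathcal S})$, where $P_W|_{\mathcal S}$ is the principal submatrix indexed by $\mathcal S$. *)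

theory Defs
  imports "HOL-Analysis.Analysis"
begin

text \<open>Ambient space R^m is modelled as real^'m with 'm a finite index type; [m] = UNIV.\<close>

definition orth_proj :: "(real^'m::finite) set \<Rightarrow> real^'m \<Rightarrow> real^'m" where
  "orth_proj W x = (THE y. y \<in> W \<and> (\<forall>w\<in>W. (x - y) \<bullet> w = 0))"

definition proj_matrix :: "(real^'m::finite) set \<Rightarrow> real^'m^'m" where
  "proj_matrix W = (\<chi> i j. orth_proj W (axis j 1) $ i)"

definition principal_minor :: "real^'m^'m \<Rightarrow> 'm::finite set \<Rightarrow> real" where
  "principal_minor A S =
     (\<Sum>p\<in>{p. p permutes S}. of_int (sign p) * (\<Prod>i\<in>S. A $ i $ p i))"

definition det_measure :: "(real^'m::finite) set \<Rightarrow> 'm set \<Rightarrow> real" where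
  "det_measure W S = (if card S = dim W then principal_minor (proj_matrix W) S else 0)"

definition det_prob :: "(real^'m::finite) set \<Rightarrow> ('m set \<Rightarrow> bool) \<Rightarrow> real" where
  "det_prob W E = (\<Sum>S\<in>{S. card S = dim W \<and> E S}. det_measure W S)"

end

theory Submission
  imports Defs
begin

(* Write P for the matrix of the projection onto W. Expanding det (I + D P), D = diag z, into
   principal minors gives  sum over S of det(P|S) * prod_{i in S} z_i.  For z = -1 on a set U and
   z = t - 1 off U, the idempotence P P = P factors  I + D P = (rows of I - P in U, of I elsewhere)
   * (I + (t - 1) P), whose determinant is det((I - P)|U) * t^(dim W). Minors of size above
   rank P = dim W vanish, so comparing coefficients of t^(dim W) shows that a sample avoids U with
   probability det((I - P)|U); in particular P^W(u in S) = P_uu = |P e_u|^2.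
   For x in W we have x(u) = <P e_u, x>, so x(u)^2 <= P_uu |x|^2 by Cauchy-Schwarz. The vector
   x = sum_i xi_i(u) xi_i / |xi_i|^2 lies in W with x(u) = A := sum_i 1/|xi_i|^2, and the
   near-orthogonality of the xi_i bounds |x|^2 <= (1 + gamma k) A. Hence
   P_uu >= A / (1 + gamma k) >= (1 - gamma k / (1 - gamma k)) A. *)

lemma orth_proj_unique:
  assumes "subspace W" "y \<in> W" "\<And>w. w \<in> W \<Longrightarrow> (x - y) \<bullet> w = 0"
  shows "orth_proj W x = y"
  unfolding orth_proj_def
proof (rule the_equality)
  show "y \<in> W \<and> (\<forall>w\<in>W. (x - y) \<bullet> w = 0)"
    using assms by auto
next
  fix y' assume y': "y' \<in> W \<and> (\<forall>w\<in>W. (x - y') \<bullet> w = 0)"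
  then have "y' - y \<in> W"
    using assms subspace_diff by blast
  then have "(x - y) \<bullet> (y' - y) - (x - y') \<bullet> (y' - y) = 0"
    using y' assms(3) by auto
  then have "(y' - y) \<bullet> (y' - y) = 0"
    by (simp add: inner_diff_left inner_diff_right inner_commute)
  then show "y' = y" by simp
qed

lemma orth_proj_exists:
  fixes W :: "'a::euclidean_space set"
  assumes "subspace W"
  obtains y where "y \<in> W" "\<And>w. w \<in> W \<Longrightarrow> (x - y) \<bullet> w = 0"
proof -
  obtain y z where y: "y \<in> span W" and z: "\<And>w. w \<in> span W \<Longrightarrow> orthogonal z w"
    and "x = y + z"
    using orthogonal_subspace_decomp_exists[of W x] by blast
  moreover have "y \<in> W"
    using y assms by (metis span_eq_iff)
  ultimately show thesis
    using that by (simp add: orthogonal_def span_base)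
qed

lemma orth_proj_in_subspace: "subspace W \<Longrightarrow> orth_proj W x \<in> W"
  by (metis orth_proj_exists orth_proj_unique)

lemma orth_proj_residual_orthogonal:
  "subspace W \<Longrightarrow> w \<in> W \<Longrightarrow> (x - orth_proj W x) \<bullet> w = 0"
  by (metis orth_proj_exists orth_proj_unique)

lemma orth_proj_id: "subspace W \<Longrightarrow> x \<in> W \<Longrightarrow> orth_proj W x = x"
  by (rule orth_proj_unique) auto

lemma orth_proj_eq_0: "subspace W \<Longrightarrow> (\<And>w. w \<in> W \<Longrightarrow> x \<bullet> w = 0) \<Longrightarrow> orth_proj W x = 0"
  by (rule orth_proj_unique) (auto simp: subspace_0)

lemma linear_orth_proj:
  fixes W :: "(real^'m::finite) set"
  assumes W: "subspace W"
  shows "linear (orth_proj W)"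
proof (rule linearI)
  fix x y :: "real^'m"
  show "orth_proj W (x + y) = orth_proj W x + orth_proj W y"
  proof (rule orth_proj_unique[OF W])
    show "orth_proj W x + orth_proj W y \<in> W"
      using W orth_proj_in_subspace subspace_add by blast
    fix w assume "w \<in> W"
    then show "(x + y - (orth_proj W x + orth_proj W y)) \<bullet> w = 0"
      using orth_proj_residual_orthogonal[OF W, of w x] orth_proj_residual_orthogonal[OF W, of w y]
      by (simp add: algebra_simps inner_diff_left inner_add_left)
  qed
next
  fix c :: real and x :: "real^'m"
  show "orth_proj W (c *\<^sub>R x) = c *\<^sub>R orth_proj W x"
  proof (rule orth_proj_unique[OF W])
    show "c *\<^sub>R orth_proj W x \<in> W"
      using W orth_proj_in_subspace subspace_scale by blast
    fix w assume "w \<in> W"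
    then show "(c *\<^sub>R x - c *\<^sub>R orth_proj W x) \<bullet> w = 0"
      using orth_proj_residual_orthogonal[OF W, of w x]
      by (simp add: inner_diff_left)
  qed
qed

lemma proj_matrix_eq_matrix: "proj_matrix W = matrix (orth_proj W)"
  unfolding proj_matrix_def matrix_def by simp

lemma proj_matrix_mult_vec: "subspace W \<Longrightarrow> proj_matrix W *v x = orth_proj W x"
  by (simp add: proj_matrix_eq_matrix matrix_works linear_orth_proj)

lemma proj_matrix_idempotent:
  assumes W: "subspace W"
  shows "proj_matrix W ** proj_matrix W = proj_matrix W"
proof -
  have "orth_proj W \<circ> orth_proj W = orth_proj W"
    using W by (simp add: fun_eq_iff orth_proj_id orth_proj_in_subspace)
  then show ?thesis
    using matrix_compose[OF linear_orth_proj linear_orth_proj, OF W W]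
    by (simp add: proj_matrix_eq_matrix)
qed

lemma rank_proj_matrix:
  assumes W: "subspace W"
  shows "rank (proj_matrix W) = dim W"
proof -
  have "range (\<lambda>x. proj_matrix W *v x) = W"
    using W by (auto simp: proj_matrix_mult_vec orth_proj_in_subspace intro: orth_proj_id[symmetric])
  then show ?thesis
    by (simp add: rank_dim_range)
qed

lemma coordinate_eq_inner_orth_proj:
  "subspace W \<Longrightarrow> x \<in> W \<Longrightarrow> x $ u = orth_proj W (axis u 1) \<bullet> x"
  using orth_proj_residual_orthogonal[of W x "axis u 1"]
  by (simp add: inner_diff_left inner_axis')

lemma proj_matrix_diag:
  assumes W: "subspace W"
  shows "proj_matrix W $ u $ u = (norm (orth_proj W (axis u 1)))\<^sup>2"
  using coordinate_eq_inner_orth_proj[OF W orth_proj_in_subspace[OF W]]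
  by (simp add: proj_matrix_def power2_norm_eq_inner)

lemma coordinate_sq_le:
  assumes W: "subspace W" and x: "x \<in> W"
  shows "(x $ u)\<^sup>2 \<le> proj_matrix W $ u $ u * (norm x)\<^sup>2"
proof -
  have "\<bar>x $ u\<bar> \<le> norm (orth_proj W (axis u 1)) * norm x"
    using coordinate_eq_inner_orth_proj[OF W x] Cauchy_Schwarz_ineq2 by metis
  then have "(x $ u)\<^sup>2 \<le> (norm (orth_proj W (axis u 1)) * norm x)\<^sup>2"
    by (metis abs_ge_zero power2_abs power_mono)
  then show ?thesis
    by (simp add: proj_matrix_diag[OF W] power_mult_distrib)
qed

lemma proj_matrix_diag_ge:
  assumes W: "subspace W" and x: "x \<in> W" "x $ u = a" and "0 < a"
    and norm_x: "(norm x)\<^sup>2 \<le> C * a"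
  shows "a / C \<le> proj_matrix W $ u $ u"
proof -
  have "a * a = (x $ u)\<^sup>2"
    using x(2) by (simp add: power2_eq_square)
  also have "\<dots> \<le> proj_matrix W $ u $ u * (norm x)\<^sup>2"
    by (rule coordinate_sq_le[OF W x(1)])
  also have "\<dots> \<le> proj_matrix W $ u $ u * (C * a)"
    using norm_x by (rule mult_left_mono) (simp add: proj_matrix_diag[OF W])
  finally have "a * a \<le> a * (proj_matrix W $ u $ u * C)"
    by (simp add: mult_ac)
  then have "a \<le> proj_matrix W $ u $ u * C"
    using \<open>0 < a\<close> by (rule mult_left_le_imp_le)
  moreover have "x \<noteq> 0"
    using x(2) \<open>0 < a\<close> by auto
  then have "0 < C * a"
    using norm_x by (smt (verit) zero_less_norm_iff zero_less_power)
  then have "0 < C"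
    using \<open>0 < a\<close> by (simp add: zero_less_mult_iff)
  ultimately show ?thesis
    by (simp add: divide_le_eq)
qed

definition pad_rows :: "real^'m^'m \<Rightarrow> 'm::finite set \<Rightarrow> real^'m^'m" where
  "pad_rows A S = (\<chi> i j. if i \<in> S then A $ i $ j else if i = j then 1 else 0)"

lemma det_pad_rows: "det (pad_rows A S) = principal_minor A S"
proof -
  have "det (pad_rows A S)
      = (\<Sum>p\<in>{p. p permutes S}. of_int (sign p) * (\<Prod>i\<in>UNIV. pad_rows A S $ i $ p i))"
    unfolding det_def
  proof (rule sum.mono_neutral_right)
    show "{p. p permutes S} \<subseteq> {p. p permutes UNIV}"
      by (auto intro: permutes_subset)
    show "\<forall>p\<in>{p. p permutes UNIV} - {p. p permutes S}.
            of_int (sign p) * (\<Prod>i\<in>UNIV. pad_rows A S $ i $ p i) = 0"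
    proof
      fix p assume "p \<in> {p. p permutes UNIV} - {p. p permutes S}"
      then obtain i where "i \<notin> S" "p i \<noteq> i"
        unfolding permutes_def by auto
      then have "pad_rows A S $ i $ p i = 0"
        by (simp add: pad_rows_def)
      then show "of_int (sign p) * (\<Prod>i\<in>UNIV. pad_rows A S $ i $ p i) = 0"
        by (metis UNIV_I finite mult_zero_right prod_zero)
    qed
  qed (simp add: finite_permutations)
  also have "\<dots> = principal_minor A S"
    unfolding principal_minor_def
  proof (rule sum.cong[OF refl])
    fix p assume "p \<in> {p. p permutes S}"
    then have "(\<Prod>i\<in>UNIV. pad_rows A S $ i $ p i) = (\<Prod>i\<in>S. pad_rows A S $ i $ p i)"
      by (intro prod.mono_neutral_right) (auto simp: pad_rows_def permutes_not_in)
    then show "of_int (sign p) * (\<Prod>i\<in>UNIV. pad_rows A S $ i $ p i)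
             = of_int (sign p) * (\<Prod>i\<in>S. A $ i $ p i)"
      by (simp add: pad_rows_def)
  qed
  finally show ?thesis .
qed

lemma principal_minor_singleton: "principal_minor A {u} = A $ u $ u"
  unfolding principal_minor_def by simp

lemma principal_minor_scale_rows:
  "principal_minor (\<chi> i j. c i * A $ i $ j) S = principal_minor A S * (\<Prod>i\<in>S. c i)"
  unfolding principal_minor_def
  by (simp add: sum_distrib_left prod.distrib mult_ac)

lemma det_id_plus:
  fixes N :: "real^'m::finite^'m"
  shows "det (mat 1 + N) = (\<Sum>S\<in>UNIV. principal_minor N S)"
proof -
  have expand: "(\<Prod>i\<in>UNIV. N $ i $ p i + (if i = p i then 1 else 0))
              = (\<Sum>S\<in>UNIV. \<Prod>i\<in>UNIV. pad_rows N S $ i $ p i)" for p :: "'m \<Rightarrow> 'm"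
  proof -
    have "(\<Prod>i\<in>UNIV. N $ i $ p i + (if i = p i then 1 else 0))
        = (\<Sum>S\<in>Pow UNIV. (\<Prod>i\<in>S. N $ i $ p i) * (\<Prod>i\<in>UNIV - S. if i = p i then 1 else 0))"
      by (rule prod_add) simp
    also have "\<dots> = (\<Sum>S\<in>UNIV. \<Prod>i\<in>UNIV. pad_rows N S $ i $ p i)"
      by (simp add: pad_rows_def prod.If_cases Compl_eq_Diff_UNIV)
    finally show ?thesis .
  qed
  have "det (mat 1 + N)
      = (\<Sum>p\<in>{p. p permutes UNIV}. of_int (sign p) * (\<Prod>i\<in>UNIV. N $ i $ p i + (if i = p i then 1 else 0)))"
    unfolding det_def by (simp add: mat_def add.commute)
  also have "\<dots> = (\<Sum>S\<in>UNIV. det (pad_rows N S))"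
    unfolding expand det_def sum_distrib_left by (rule sum.swap)
  finally show ?thesis
    by (simp add: det_pad_rows)
qed

lemma kernel_vector_supported_exists:
  fixes A :: "real^'m::finite^'m"
  assumes "rank A < card S"
  obtains z where "z \<noteq> 0" "\<And>i. i \<notin> S \<Longrightarrow> z $ i = 0" "A *v z = 0"
proof -
  define B where "B = (\<lambda>i. axis i (1::real)) ` S"
  have "independent B"
    unfolding B_def by (rule independent_mono[OF independent_Basis]) (auto simp: Basis_vec_def)
  moreover have "card B = card S"
    unfolding B_def by (rule card_image) (auto simp: inj_on_def axis_eq_axis)
  ultimately have dimB: "dim B = card S"
    by (metis dim_eq_card_independent)
  have "\<not> inj_on ((*v) A) (span B)"
  proof
    assume "inj_on ((*v) A) (span B)"
    then have "dim ((*v) A ` B) = card S"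
      using dim_image_eq[OF matrix_vector_mul_linear] dimB by metis
    moreover have "dim ((*v) A ` B) \<le> rank A"
      unfolding rank_dim_range by (rule dim_subset) auto
    ultimately show False
      using assms by simp
  qed
  then obtain x y where "x \<in> span B" "y \<in> span B" "x \<noteq> y" "A *v x = A *v y"
    unfolding inj_on_def by blast
  moreover have "span B \<subseteq> {v. \<forall>i. i \<notin> S \<longrightarrow> v $ i = 0}"
    by (rule span_minimal) (auto simp: B_def subspace_def axis_def)
  ultimately show thesis
    using that[of "x - y"] span_diff by (force simp: matrix_vector_mult_diff_distrib)
qed

lemma principal_minor_eq_0_if_rank_less:
  fixes A :: "real^'m::finite^'m"
  assumes "rank A < card S"
  shows "principal_minor A S = 0"
proof -
  obtain z where z: "z \<noteq> 0" "\<And>i. i \<notin> S \<Longrightarrow> z $ i = 0" "A *v z = 0"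
    using kernel_vector_supported_exists[OF assms] by blast
  have "pad_rows A S *v z = 0"
    using z unfolding vec_eq_iff
    by (auto simp: pad_rows_def matrix_vector_mult_def if_distrib[of "\<lambda>a. a * _"] sum.If_cases)
  then have "rank (pad_rows A S) < CARD('m)"
    using z(1) matrix_nonfull_linear_equations_eq rank_bound[of "pad_rows A S"]
    by (metis min.bounded_iff nat_less_le)
  then show ?thesis
    by (metis det_eq_0_rank det_pad_rows)
qed

lemma det_eq_prod_eigenvalues:
  fixes M U :: "real^'n^'n"
  assumes U: "invertible U" and eigen: "\<And>j. M *v column j U = mu j *\<^sub>R column j U"
  shows "det M = (\<Prod>j\<in>UNIV. mu j)"
proof -
  let ?D = "\<chi> i j. if i = j then mu j else (0::real)"
  have MU: "M ** U = U ** ?D"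
  proof -
    have "(M ** U) $ i $ j = (M *v column j U) $ i" for i j
      by (simp add: matrix_matrix_mult_def matrix_vector_mult_def column_def)
    then show ?thesis
      using eigen by (simp add: vec_eq_iff matrix_matrix_mult_def column_def if_distrib cong: if_cong)
  qed
  have "det M * det U = det U * det ?D"
    by (simp add: det_mul[symmetric] MU)
  also have "det ?D = (\<Prod>j\<in>UNIV. mu j)"
    by (simp add: det_diagonal)
  finally have "det M * det U = det U * (\<Prod>j\<in>UNIV. mu j)" .
  moreover have "det U \<noteq> 0"
    using U invertible_det_nz by blast
  ultimately show ?thesis
    by simp
qed

lemma orthonormal_basis_adapted_to_subspace:
  fixes W :: "'a::euclidean_space set"
  assumes W: "subspace W"
  obtains B B' where "B \<subseteq> W" "card B = dim W" "\<And>x w. x \<in> B' \<Longrightarrow> w \<in> W \<Longrightarrow> orthogonal x w"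
    and "pairwise orthogonal (B \<union> B')" "\<And>x. x \<in> B \<union> B' \<Longrightarrow> norm x = 1"
    and "span (B \<union> B') = UNIV"
proof -
  define W' where "W' = {y. \<forall>x\<in>W. orthogonal x y}"
  obtain B where B: "B \<subseteq> W" "pairwise orthogonal B" "\<And>x. x \<in> B \<Longrightarrow> norm x = 1"
      "card B = dim W" "span B = W"
    using orthonormal_basis_subspace[OF W] by metis
  have "subspace W'"
    unfolding W'_def by (rule subspace_orthogonal_to_vectors)
  then obtain B' where B': "B' \<subseteq> W'" "pairwise orthogonal B'" "\<And>x. x \<in> B' \<Longrightarrow> norm x = 1"
      "span B' = W'"
    using orthonormal_basis_subspace by metis
  have cross: "orthogonal x w" if "x \<in> B'" "w \<in> W" for x w
    using that B'(1) W'_def orthogonal_commute by blast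
  show thesis
  proof (rule that[OF B(1,4) cross])
    show "pairwise orthogonal (B \<union> B')"
      using B(1,2) B'(2) cross orthogonal_commute unfolding pairwise_def by (metis Un_iff subsetD)
    show "norm x = 1" if "x \<in> B \<union> B'" for x
      using that B(3) B'(3) by blast
    have "x \<in> span (B \<union> B')" for x
    proof -
      obtain y z where y: "y \<in> span W" and z: "\<And>w. w \<in> span W \<Longrightarrow> orthogonal z w"
        and "x = y + z"
        using orthogonal_subspace_decomp_exists[of W x] by blast
      have "y \<in> span B"
        using y B(5) by (metis span_span)
      moreover have "z \<in> W'"
        unfolding W'_def using z span_base orthogonal_commute by blast
      then have "z \<in> span B'"
        using B'(4) by simp
      ultimately show ?thesis
        using \<open>x = y + z\<close> span_add span_mono[of B "B \<union> B'"] span_mono[of B' "B \<union> B'"] by blast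
    qed
    then show "span (B \<union> B') = UNIV"
      by auto
  qed
qed

lemma orthogonal_matrix_adapted_to_subspace:
  fixes W :: "(real^'n) set"
  assumes W: "subspace W"
  obtains U :: "real^'n^'n" where "orthogonal_matrix U"
    and "\<And>j. column j U \<in> W \<or> (\<forall>w\<in>W. column j U \<bullet> w = 0)"
    and "card {j. column j U \<in> W} = dim W"
proof -
  obtain B B' where B: "B \<subseteq> W" "card B = dim W"
    and B': "\<And>x w. x \<in> B' \<Longrightarrow> w \<in> W \<Longrightarrow> orthogonal x w"
    and orth: "pairwise orthogonal (B \<union> B')" and unit: "\<And>x. x \<in> B \<union> B' \<Longrightarrow> norm x = 1"
    and span: "span (B \<union> B') = UNIV"
    using orthonormal_basis_adapted_to_subspace[OF W] by blast
  have "independent (B \<union> B')"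
    using pairwise_orthogonal_independent[OF orth] unit by force
  then have "finite (B \<union> B')" "card (B \<union> B') = CARD('n)"
    using independent_imp_finite[of "B \<union> B'"] dim_eq_card_independent[of "B \<union> B'"]
      dim_span[of "B \<union> B'"] span
    by (blast, simp)
  then obtain g where g: "bij_betw g (UNIV :: 'n set) (B \<union> B')"
    using finite_same_card_bij[of "UNIV :: 'n set" "B \<union> B'"] by auto
  define U :: "real^'n^'n" where "U = (\<chi> i j. g j $ i)"
  have col: "column j U = g j" for j
    by (simp add: U_def column_def vec_eq_iff)
  have gC: "g j \<in> B \<union> B'" for j
    using g bij_betwE by blast
  have "inj g"
    using g bij_betw_imp_inj_on by blast
  have "orthogonal_matrix U"
    unfolding orthogonal_matrix_orthonormal_columns col
    using unit gC orth \<open>inj g\<close> unfolding pairwise_def inj_def by blast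
  moreover have "column j U \<in> W \<or> (\<forall>w\<in>W. column j U \<bullet> w = 0)" for j
    using gC[of j] B(1) B' unfolding col orthogonal_def by blast
  moreover have "{j. column j U \<in> W} = g -` B"
  proof -
    have "g j \<notin> W" if "g j \<in> B'" for j
      using that B'[of "g j" "g j"] unit by (force simp: orthogonal_def)
    then show ?thesis
      using gC B(1) unfolding col by blast
  qed
  then have "card {j. column j U \<in> W} = dim W"
    using card_vimage_inj[OF \<open>inj g\<close>] g B(2) unfolding bij_betw_def by auto
  ultimately show thesis
    using that by blast
qed

lemma det_id_plus_scaled_proj_matrix:
  fixes W :: "(real^'m::finite) set"
  assumes W: "subspace W"
  shows "det (mat 1 + (t - 1) *\<^sub>R proj_matrix W) = t ^ dim W"
proof -
  obtain U where U: "orthogonal_matrix U"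
    and adapted: "\<And>j. column j U \<in> W \<or> (\<forall>w\<in>W. column j U \<bullet> w = 0)"
    and card: "card {j. column j U \<in> W} = dim W"
    using orthogonal_matrix_adapted_to_subspace[OF W] by blast
  have "(mat 1 + (t - 1) *\<^sub>R proj_matrix W) *v column j U
      = (if column j U \<in> W then t else 1) *\<^sub>R column j U" for j
    using adapted[of j] W
    by (auto simp: matrix_vector_mult_add_rdistrib proj_matrix_mult_vec orth_proj_id orth_proj_eq_0
        scaleR_matrix_vector_assoc[symmetric] algebra_simps)
  moreover have "invertible U"
    using U unfolding orthogonal_matrix_def invertible_def by blast
  ultimately have "det (mat 1 + (t - 1) *\<^sub>R proj_matrix W)
      = (\<Prod>j\<in>UNIV. if column j U \<in> W then t else 1)"
    by (rule det_eq_prod_eigenvalues[rotated])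
  also have "\<dots> = t ^ dim W"
    by (simp add: prod.If_cases card)
  finally show ?thesis .
qed

lemma id_plus_scaled_rows_factor:
  fixes P :: "real^'m::finite^'m"
  assumes idem: "P ** P = P"
  shows "mat 1 + (\<chi> i j. (if i \<in> U then -1 else t - 1) * P $ i $ j)
       = pad_rows (mat 1 - P) U ** (mat 1 + (t - 1) *\<^sub>R P)"
proof -
  have PP: "(\<Sum>k\<in>UNIV. P $ i $ k * P $ k $ j) = P $ i $ j" for i j
  proof -
    have "(P ** P) $ i $ j = P $ i $ j"
      using idem by simp
    then show ?thesis
      by (simp add: matrix_matrix_mult_def)
  qed
  show ?thesis
    unfolding vec_eq_iff
    by (auto simp: matrix_matrix_mult_def pad_rows_def mat_def algebra_simps sum.distrib
        sum_subtractf sum_distrib_left[symmetric] PP mult_delta_left mult_delta_right)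
qed

lemma sum_eq_by_top_coeff:
  fixes c :: "'a::finite set \<Rightarrow> real" and q :: "'a set \<Rightarrow> real poly"
  assumes vanish: "\<And>S. d < card S \<Longrightarrow> c S = 0"
    and top: "\<And>S. card S \<le> d \<Longrightarrow> coeff (q S) d = (if card S = d \<and> E S then 1 else 0)"
    and ident: "\<And>t. (\<Sum>S\<in>UNIV. c S * poly (q S) t) = K * t ^ d"
  shows "(\<Sum>S\<in>{S. card S = d \<and> E S}. c S) = K"
proof -
  have "poly (\<Sum>S\<in>UNIV. smult (c S) (q S)) = poly (monom K d)"
    using ident by (simp add: fun_eq_iff poly_sum poly_monom)
  then have "(\<Sum>S\<in>UNIV. smult (c S) (q S)) = monom K d"
    by (rule poly_eq_poly_eq_iff[THEN iffD1])
  then have "K = coeff (\<Sum>S\<in>UNIV. smult (c S) (q S)) d"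
    by simp
  also have "\<dots> = (\<Sum>S\<in>UNIV. if card S = d \<and> E S then c S else 0)"
    unfolding coeff_sum coeff_smult
  proof (rule sum.cong[OF refl])
    fix S
    show "c S * coeff (q S) d = (if card S = d \<and> E S then c S else 0)"
      by (cases "d < card S") (simp_all add: vanish top)
  qed
  finally show ?thesis
    by (simp add: sum.inter_filter[symmetric])
qed

lemma det_prob_eq_sum_principal_minors:
  "det_prob W E = (\<Sum>S\<in>{S. card S = dim W \<and> E S}. principal_minor (proj_matrix W) S)"
  unfolding det_prob_def det_measure_def by simp

lemma det_prob_avoid:
  fixes W :: "(real^'m::finite) set"
  assumes W: "subspace W"
  shows "det_prob W (\<lambda>S. S \<inter> U = {}) = principal_minor (mat 1 - proj_matrix W) U"
proof -
  let ?P = "proj_matrix W" and ?d = "dim W"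
  define q :: "'m set \<Rightarrow> real poly" where "q S = smult ((-1) ^ card (S \<inter> U)) ([:-1, 1:] ^ card (S - U))" for S
  have ident: "(\<Sum>S\<in>UNIV. principal_minor ?P S * poly (q S) t)
             = principal_minor (mat 1 - ?P) U * t ^ ?d" for t
  proof -
    have "poly (q S) t = (\<Prod>i\<in>S. if i \<in> U then -1 else t - 1)" for S
      by (simp add: q_def poly_power prod.If_cases Int_def Diff_eq)
    then have "(\<Sum>S\<in>UNIV. principal_minor ?P S * poly (q S) t)
             = det (mat 1 + (\<chi> i j. (if i \<in> U then -1 else t - 1) * ?P $ i $ j))"
      by (simp add: det_id_plus principal_minor_scale_rows)
    also have "\<dots> = principal_minor (mat 1 - ?P) U * t ^ ?d"
      by (simp add: id_plus_scaled_rows_factor proj_matrix_idempotent W det_mul det_pad_rows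
          det_id_plus_scaled_proj_matrix)
    finally show ?thesis .
  qed
  have top: "coeff (q S) ?d = (if card S = ?d \<and> S \<inter> U = {} then 1 else 0)" if "card S \<le> ?d" for S
  proof -
    have split: "card S = card (S \<inter> U) + card (S - U)"
      by (rule card_Int_Diff) simp
    then have "coeff ([:-1, 1::real:] ^ card (S - U)) ?d = (if card (S - U) = ?d then 1 else 0)"
      using that coeff_linear_power[of "-1::real"] degree_linear_power[of "-1::real"]
      by (auto simp: coeff_eq_0)
    then show ?thesis
      using that split by (auto simp: q_def)
  qed
  have vanish: "principal_minor ?P S = 0" if "?d < card S" for S
    using that by (intro principal_minor_eq_0_if_rank_less) (simp add: rank_proj_matrix[OF W])
  show ?thesis
    unfolding det_prob_eq_sum_principal_minors by (rule sum_eq_by_top_coeff[OF vanish top ident])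
qed

lemma det_prob_total:
  fixes W :: "(real^'m::finite) set"
  assumes "subspace W"
  shows "det_prob W (\<lambda>S. True) = 1"
  using det_prob_avoid[OF assms, of "{}"] by (simp add: principal_minor_def)

lemma det_prob_compl:
  fixes W :: "(real^'m::finite) set"
  assumes "subspace W"
  shows "det_prob W (\<lambda>S. \<not> E S) = 1 - det_prob W E"
proof -
  have "det_prob W (\<lambda>S. True) = det_prob W E + det_prob W (\<lambda>S. \<not> E S)"
    unfolding det_prob_def
    by (subst sum.union_disjoint[symmetric]) (auto intro: sum.cong)
  then show ?thesis
    using det_prob_total[OF assms] by simp
qed

lemma det_prob_mem:
  fixes W :: "(real^'m::finite) set"
  assumes W: "subspace W"
  shows "det_prob W (\<lambda>S. u \<in> S) = proj_matrix W $ u $ u"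
  using det_prob_compl[OF W, of "\<lambda>S. u \<notin> S"] det_prob_avoid[OF W, of "{u}"]
  by (simp add: principal_minor_singleton mat_def)

lemma norm_sum_near_orthogonal_le:
  fixes \<xi> :: "'i \<Rightarrow> 'a::real_inner" and c :: "'i \<Rightarrow> real"
  assumes K: "finite K" and \<gamma>: "0 \<le> \<gamma>"
    and c: "\<And>i. i \<in> K \<Longrightarrow> \<bar>c i\<bar> \<le> 1 / (norm (\<xi> i))\<^sup>2"
    and near: "\<And>i j. i \<in> K \<Longrightarrow> j \<in> K \<Longrightarrow> i \<noteq> j \<Longrightarrow>
                 \<bar>\<xi> i \<bullet> \<xi> j\<bar> \<le> \<gamma> * min ((norm (\<xi> i))\<^sup>2) ((norm (\<xi> j))\<^sup>2)"
  shows "(norm (\<Sum>i\<in>K. c i *\<^sub>R \<xi> i))\<^sup>2 \<le> (1 + \<gamma> * card K) * (\<Sum>i\<in>K. 1 / (norm (\<xi> i))\<^sup>2)"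
proof -
  define n where "n i = (norm (\<xi> i))\<^sup>2" for i
  have n_nonneg: "0 \<le> n i" for i
    by (simp add: n_def)
  have pair_bound: "c i * c j * (\<xi> i \<bullet> \<xi> j) \<le> (if i = j then 1 / n i else 0) + \<gamma> / n j"
    if "i \<in> K" "j \<in> K" for i j
  proof (cases "i = j")
    case True
    have "c i * c i * (\<xi> i \<bullet> \<xi> i) = (c i)\<^sup>2 * n i"
      by (simp add: n_def dot_square_norm power2_eq_square)
    also have "\<dots> \<le> (1 / n i)\<^sup>2 * n i"
      using power_mono[OF c[OF that(1)] abs_ge_zero, of 2] n_nonneg
      by (intro mult_right_mono) (auto simp: n_def)
    also have "\<dots> = 1 / n i"
      by (simp add: power2_eq_square)
    finally have "c i * c i * (\<xi> i \<bullet> \<xi> i) \<le> 1 / n i" .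
    moreover have "0 \<le> \<gamma> / n j"
      using \<gamma> n_nonneg by simp
    ultimately show ?thesis
      using True by simp
  next
    case False
    have "c i * c j * (\<xi> i \<bullet> \<xi> j) \<le> (1 / n i) * (1 / n j) * (\<gamma> * n i)"
    proof -
      have "\<bar>\<xi> i \<bullet> \<xi> j\<bar> \<le> \<gamma> * n i"
        using near[OF that False] \<gamma> unfolding n_def by (meson min.cobounded1 mult_left_mono order_trans)
      then have "\<bar>c i * c j * (\<xi> i \<bullet> \<xi> j)\<bar> \<le> (1 / n i) * (1 / n j) * (\<gamma> * n i)"
        unfolding abs_mult using c that by (intro mult_mono) (auto simp: n_def)
      then show ?thesis
        by linarith
    qed
    also have "\<dots> \<le> \<gamma> / n j"
      using \<gamma> n_nonneg by (cases "n i = 0") auto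
    finally show ?thesis
      using False by simp
  qed
  have "(norm (\<Sum>i\<in>K. c i *\<^sub>R \<xi> i))\<^sup>2 = (\<Sum>i\<in>K. \<Sum>j\<in>K. c i * c j * (\<xi> i \<bullet> \<xi> j))"
    by (simp add: power2_norm_eq_inner inner_sum_left inner_sum_right sum_distrib_left mult_ac inner_commute)
  also have "\<dots> \<le> (\<Sum>i\<in>K. \<Sum>j\<in>K. (if i = j then 1 / n i else 0) + \<gamma> / n j)"
    by (intro sum_mono pair_bound)
  also have "\<dots> = (\<Sum>i\<in>K. 1 / n i) + card K * (\<gamma> * (\<Sum>j\<in>K. 1 / n j))"
    using K by (simp add: sum.distrib sum_distrib_left)
  finally show ?thesis
    by (simp add: n_def algebra_simps)
qed

theorem corollary2p13:
  fixes W :: "(real^'m::finite) set" and u :: 'm and k :: nat and \<gamma> :: real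
    and \<xi> :: "nat \<Rightarrow> real^'m"
  assumes "subspace W"
    and "k \<ge> 1"
    and "0 < \<gamma>" and "\<gamma> < 1 / real k"
    and "\<And>i. i \<in> {1..k} \<Longrightarrow> \<xi> i \<in> W"
    and "\<And>i. i \<in> {1..k} \<Longrightarrow> \<bar>\<xi> i $ u\<bar> = 1"
    and "\<And>i j. i \<in> {1..k} \<Longrightarrow> j \<in> {1..k} \<Longrightarrow> i \<noteq> j \<Longrightarrow>
           \<bar>\<xi> i \<bullet> \<xi> j\<bar> \<le> \<gamma> * min ((norm (\<xi> i))\<^sup>2) ((norm (\<xi> j))\<^sup>2)"
  shows "det_prob W (\<lambda>S. u \<in> S)
           \<ge> (1 - \<gamma> * real k / (1 - \<gamma> * real k)) * (\<Sum>i=1..k. 1 / (norm (\<xi> i))\<^sup>2)"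
proof -
  note W = assms(1) and unit = assms(6)
  define A where "A = (\<Sum>i=1..k. 1 / (norm (\<xi> i))\<^sup>2)"
  define x where "x = (\<Sum>i=1..k. (\<xi> i $ u / (norm (\<xi> i))\<^sup>2) *\<^sub>R \<xi> i)"
  define g where "g = \<gamma> * real k"
  have g: "0 < g" "g < 1"
    using assms(2-4) by (auto simp: g_def field_simps)
  have "\<xi> i \<noteq> 0" if "i \<in> {1..k}" for i
    using unit[OF that] by auto
  then have "0 < A"
    unfolding A_def using assms(2) by (intro sum_pos) auto
  have "x \<in> W"
    unfolding x_def using W assms(5) by (intro subspace_sum subspace_scale) auto
  have "x $ u = A"
    unfolding x_def A_def sum_component
  proof (rule sum.cong[OF refl])
    fix i assume "i \<in> {1..k}"
    then have "(\<xi> i $ u)\<^sup>2 = 1"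
      using unit by (metis power2_abs one_power2)
    then show "((\<xi> i $ u / (norm (\<xi> i))\<^sup>2) *\<^sub>R \<xi> i) $ u = 1 / (norm (\<xi> i))\<^sup>2"
      by (simp add: power2_eq_square)
  qed
  have "\<bar>\<xi> i $ u / (norm (\<xi> i))\<^sup>2\<bar> \<le> 1 / (norm (\<xi> i))\<^sup>2" if "i \<in> {1..k}" for i
    using unit[OF that] by (simp add: abs_divide)
  then have "(norm x)\<^sup>2 \<le> (1 + \<gamma> * card {1..k}) * A"
    unfolding x_def A_def using assms(3,7) by (intro norm_sum_near_orthogonal_le) auto
  then have "A / (1 + g) \<le> det_prob W (\<lambda>S. u \<in> S)"
    unfolding det_prob_mem[OF W] g_def
    using proj_matrix_diag_ge[OF W \<open>x \<in> W\<close> \<open>x $ u = A\<close> \<open>0 < A\<close>] by simp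
  moreover have "(1 - g / (1 - g)) * A \<le> A / (1 + g)"
    using \<open>0 < A\<close> g by (simp add: field_simps)
  ultimately show ?thesis
    unfolding A_def g_def by linarith
qed

end
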